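(* Let $h:\mathbb{R}\to\mathbb{R}$ be $h(x):=\big(\frac{\sin(\pi x)}{\pi x}\big)^2$ (with $h(0)=1$), and let $r\ge1$. Then, considering the following functions of $x$ on the interval $[0,1]$: (i) $h(x)+h(x-1)$ has a global minimum at $x=\tfrac12$; (ii) for every $m=1,2,3,\dots$, $h(x+m)+h(x-(m+1))$ has a global maximum at $x=\tfrac12$; (iii) $h(x)+h(x-1)-\big(h(x)^r+h(x-1)^r\big)^{1/r}$ has a global maximum at $x=\tfrac12$; (iv) for every $m=1,2,3,\dots$, $\big(h(x+m)+h(x-(m+1))\big)^r-h(x+m)^r-h(x-(m+1))^r$ has a global maximum at $x=\tfrac12$.
   Context: $h$ is understood as its continuous extension at $x=0$, i.e. $h(0)=1$. *)

theory Defs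
  imports "HOL-Analysis.Analysis"
begin

definition h :: "real \<Rightarrow> real" where
  "h x = (if x = 0 then 1 else (sin (pi * x) / (pi * x))^2)"

end

theory Submission
  imports Defs
begin

text \<open>
  For \<open>0 < x < 1\<close> every shifted value \<open>h (x + n)\<close> equals \<open>sin (pi x)\<^sup>2 / (pi\<^sup>2 (x + n)\<^sup>2)\<close>,
  so (i) and (ii) become polynomial inequalities once \<open>sin (pi x)\<close> is squeezed between
  polynomials: \<open>sin (pi x)\<^sup>2 \<le> 4x(1 - x)\<close> and \<open>sin (pi x) \<ge> 4w(3/4 + w)\<close> with \<open>w = x(1 - x)\<close>,
  both from Taylor bounds for \<open>sin\<close> near \<open>0\<close> and \<open>pi/2\<close> together with numerical bounds
  on \<open>pi\<close>.
  Part (iii) follows from \<open>a + b - (a\<^sup>r + b\<^sup>r)\<^bsup>1/r\<^esup> \<le> (2 - 2\<^bsup>1/r\<^esup>) sqrt (a b)\<close>, an equality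
  for \<open>a = b\<close>, because \<open>h x h (x - 1)\<close> is largest at \<open>x = 1/2\<close>. Part (iv) follows from
  \<open>(A + B)\<^sup>r - A\<^sup>r - B\<^sup>r \<le> (1 - 2\<^bsup>1-r\<^esup>) (A + B)\<^sup>r\<close>, again an equality for \<open>A = B\<close>,
  whose right-hand side increases with \<open>A + B\<close>, so that (ii) applies.
\<close>

section \<open>Inequalities for powers\<close>

lemma one_minus_powr_le_mult_powr:
  fixes z \<theta> :: real
  assumes z: "0 < z" "z \<le> 1" and \<theta>: "0 < \<theta>" "\<theta> \<le> 1"
  shows "1 - z powr \<theta> \<le> (1 - z) * (1 + z) powr (\<theta> - 1)"
proof -
  define f where "f = (\<lambda>p. (1 - z) * (1 + z) powr (p - 1) - 1 + z powr p)"
  have "f 1 \<le> f \<theta>"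
  proof (rule DERIV_nonpos_imp_nonincreasing[OF \<theta>(2)])
    fix p assume p: "\<theta> \<le> p" "p \<le> 1"
    let ?D = "(1 - z) * ((1 + z) powr (p - 1) * ln (1 + z)) + z powr p * ln z"
    have "DERIV f p :> ?D"
      unfolding f_def using z by (auto intro!: derivative_eq_intros)
    moreover have "?D \<le> 0"
    proof -
      have "(1 + z) powr (p - 1) \<le> (1 + z) powr 0" using p z by (intro powr_mono) auto
      then have "(1 - z) * ((1 + z) powr (p - 1) * ln (1 + z)) \<le> (1 - z) * (1 * z)"
        using z ln_add_one_self_le_self[of z]
        by (intro mult_left_mono mult_mono) auto
      moreover have "z * ln z \<ge> z powr p * ln z"
      proof (rule mult_right_mono_neg)
        show "z \<le> z powr p" using z p powr_mono'[of p 1 z] by simp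
      qed (use z in auto)
      moreover have "z * ln z \<le> z * (z - 1)"
        using z ln_le_minus_one[of z] by (intro mult_left_mono) auto
      ultimately show ?thesis by (simp add: algebra_simps)
    qed
    ultimately show "\<exists>y. DERIV f p :> y \<and> y \<le> 0" by blast
  qed
  moreover have "f 1 = 0" using z by (simp add: f_def)
  ultimately show ?thesis by (simp add: f_def)
qed

lemma exp_sum_minus_powr_mean_le:
  fixes r y :: real
  assumes r: "1 \<le> r" and y: "0 \<le> y"
  shows "exp y + exp (-y) - (exp (r*y) + exp (-(r*y))) powr (1/r) \<le> 2 - 2 powr (1/r)"
proof -
  define \<theta> where "\<theta> = 1/r"
  have \<theta>: "0 < \<theta>" "\<theta> \<le> 1" "\<theta> * r = 1" using r by (auto simp: \<theta>_def)
  define Z where "Z = (\<lambda>z. exp (-(2*r*z)))"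
  \<comment> \<open>\<open>g z = (exp (r z) + exp (-r z))\<^bsup>1/r\<^esup> - exp z - exp (-z)\<close>, with \<open>exp (r z)\<close> factored out so
     that \<open>g' z / exp z\<close> is the difference bounded by the previous lemma at \<open>Z z\<close>\<close>
  define g where "g = (\<lambda>z. exp z * (1 + Z z) powr \<theta> - exp z - exp (-z))"
  have "g 0 \<le> g y"
  proof (rule DERIV_nonneg_imp_nondecreasing[OF y])
    fix z assume z: "0 \<le> z" "z \<le> y"
    have Z: "0 < Z z" "Z z \<le> 1" using r z by (auto simp: Z_def)
    have "Z z powr \<theta> = exp (\<theta> * -(2*r*z))"
      by (simp add: Z_def powr_def)
    also have "\<dots> = exp (-z) / exp z"
      using \<theta>(3) by (simp add: algebra_simps flip: exp_diff)
    finally have Z\<theta>: "Z z powr \<theta> = exp (-z) / exp z" .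
    have split: "(1 + Z z) powr \<theta> = (1 + Z z) * (1 + Z z) powr (\<theta> - 1)"
      using Z by (simp add: powr_diff)
    let ?D = "exp z * ((1 - Z z) * (1 + Z z) powr (\<theta> - 1) - (1 - Z z powr \<theta>))"
    have "DERIV g z :> exp z * (1 + Z z) powr \<theta>
        + exp z * (\<theta> * (1 + Z z) powr (\<theta> - 1) * (Z z * - (2*r))) - exp z + exp (-z)"
      unfolding g_def Z_def
      by (rule derivative_eq_intros refl | simp add: add_pos_pos)+
    moreover have "exp z * (1 + Z z) powr \<theta>
        + exp z * (\<theta> * (1 + Z z) powr (\<theta> - 1) * (Z z * - (2*r))) - exp z + exp (-z) = ?D"
      using \<theta>(3) unfolding split Z\<theta> by (simp add: field_simps)
    moreover have "0 \<le> ?D"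
      using one_minus_powr_le_mult_powr[OF Z \<theta>(1,2)] by simp
    ultimately show "\<exists>D. DERIV g z :> D \<and> 0 \<le> D" by auto
  qed
  moreover have "g 0 = 2 powr \<theta> - 2"
    by (simp add: g_def Z_def)
  moreover have "g y = (exp (r*y) + exp (-(r*y))) powr \<theta> - exp y - exp (-y)"
  proof -
    have "exp (r*y) + exp (-(r*y)) = exp (r*y) * (1 + Z y)"
      by (simp add: Z_def distrib_left flip: exp_add)
    moreover have "exp (r*y) powr \<theta> = exp y"
      using \<theta>(3) by (simp add: powr_def algebra_simps)
    ultimately show ?thesis
      by (simp add: g_def powr_mult add_pos_pos Z_def)
  qed
  ultimately show ?thesis by (simp add: \<theta>_def)
qed

lemma add_minus_lr_norm_le_sqrt_mult:
  fixes a b r :: real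
  assumes r: "1 \<le> r" and "0 \<le> a" and "0 \<le> b"
  shows "a + b - (a powr r + b powr r) powr (1/r) \<le> (2 - 2 powr (1/r)) * sqrt (a*b)"
proof -
  have ordered: "a + b - (a powr r + b powr r) powr (1/r) \<le> (2 - 2 powr (1/r)) * sqrt (a*b)"
    if b: "0 \<le> b" and ba: "b \<le> a" for a b
  proof (cases "b = 0")
    case True
    have "2 powr (1/r) \<le> 2" using r powr_mono[of "1/r" 1 2] by simp
    with True ba r show ?thesis by (simp add: powr_powr)
  next
    case False
    then have b: "0 < b" and a: "0 < a" using b ba by auto
    define m where "m = sqrt (a*b)"
    define y where "y = ln (a/b) / 2"
    have m: "0 < m" using a b by (simp add: m_def)
    have y: "0 \<le> y" using a b ba by (simp add: y_def)
    have ey: "exp y = sqrt (a/b)"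
      using a b by (simp add: y_def powr_half_sqrt[symmetric] powr_def)
    have ea: "a = m * exp y"
      using a b by (simp add: m_def ey real_sqrt_mult[symmetric])
    have eb: "b = m * exp (-y)"
      using a b by (simp add: m_def ey exp_minus real_sqrt_divide field_simps real_sqrt_mult)
    have "a powr r + b powr r = m powr r * (exp (r*y) + exp (-(r*y)))"
      unfolding ea eb using m by (simp add: powr_mult exp_powr_real distrib_left mult.commute)
    then have "(a powr r + b powr r) powr (1/r) = m * (exp (r*y) + exp (-(r*y))) powr (1/r)"
      using m r by (simp add: powr_mult powr_powr)
    then have "a + b - (a powr r + b powr r) powr (1/r)
        = m * (exp y + exp (-y) - (exp (r*y) + exp (-(r*y))) powr (1/r))"
      using ea eb by (simp add: algebra_simps)
    also have "\<dots> \<le> m * (2 - 2 powr (1/r))"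
      using exp_sum_minus_powr_mean_le[OF r y] m by (intro mult_left_mono) auto
    finally show ?thesis by (simp add: m_def mult.commute)
  qed
  show ?thesis
  proof (cases "b \<le> a")
    case True
    then show ?thesis using ordered \<open>0 \<le> b\<close> by blast
  next
    case False
    then show ?thesis using ordered[of a b] \<open>0 \<le> a\<close> by (simp add: add.commute mult.commute)
  qed
qed

lemma add_powr_le_two_powr_mult:
  fixes A B r :: real
  assumes r: "1 \<le> r" and A: "0 \<le> A" and B: "0 \<le> B"
  shows "(A + B) powr r \<le> 2 powr (r - 1) * (A powr r + B powr r)"
proof (cases "A = 0 \<or> B = 0")
  case True
  then have "(A + B) powr r = A powr r + B powr r" by auto
  also have "\<dots> \<le> 2 powr (r - 1) * (A powr r + B powr r)"
    using r mult_right_mono[of 1 "2 powr (r - 1)" "A powr r + B powr r"]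
    by (simp add: ge_one_powr_ge_zero)
  finally show ?thesis .
next
  case False
  then have "A \<in> {0<..}" "B \<in> {0<..}" using A B by auto
  from convex_onD[OF powr_convex[OF r] _ _ this, of "1/2"]
  have mid: "((A + B)/2) powr r \<le> (A powr r + B powr r) / 2" by (simp add: add_divide_distrib)
  have "(A + B) powr r = 2 powr r * ((A + B)/2) powr r"
    using A B by (simp add: powr_divide)
  also have "\<dots> \<le> 2 powr r * ((A powr r + B powr r) / 2)"
    using mid by (intro mult_left_mono) auto
  also have "\<dots> = 2 powr (r - 1) * (A powr r + B powr r)"
    by (simp add: powr_diff)
  finally show ?thesis .
qed

section \<open>Polynomial bounds for \<open>sin (\<pi> x)\<close>\<close>

lemma sin_ge_cubic:
  fixes y :: real
  assumes "0 \<le> y"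
  shows "y - y^3/6 \<le> sin y"
proof -
  obtain t where t: "sin y = (\<Sum>m<3. sin_coeff m * y ^ m) + (sin (t + 1/2 * real 3 * pi) / fact 3) * y ^ 3"
    using Maclaurin_sin_expansion by blast
  have "t + 1/2 * real 3 * pi = (t + pi/2) + pi" by simp
  then have "sin (t + 1/2 * real 3 * pi) = - cos t"
    by (simp only: sin_periodic_pi) (simp add: sin_add)
  moreover have "(\<Sum>m<3. sin_coeff m * y ^ m) = y" by (simp add: sin_coeff_def eval_nat_numeral)
  ultimately have "sin y = y - cos t * y^3 / 6" using t by (simp add: fact_numeral)
  moreover have "cos t * y^3 \<le> y^3" using assms mult_right_mono[of "cos t" 1 "y^3"] by simp
  ultimately show ?thesis by (simp add: divide_right_mono)
qed

lemma cos_ge_sextic: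
  fixes y :: real
  shows "1 - y^2/2 + y^4/24 - y^6/720 \<le> cos y"
proof -
  obtain t where t: "cos y = (\<Sum>m<6. cos_coeff m * y ^ m) + (cos (t + 1/2 * real 6 * pi) / fact 6) * y ^ 6"
    using Maclaurin_cos_expansion by blast
  have "t + 1/2 * real 6 * pi = (t + pi) + 2*pi" by simp
  then have "cos (t + 1/2 * real 6 * pi) = - cos t"
    by (simp only: cos_periodic cos_periodic_pi)
  moreover have "(\<Sum>m<6. cos_coeff m * y ^ m) = 1 - y^2/2 + y^4/24"
  proof -
    have "(\<Sum>m<6. g m) = g 0 + g 1 + g 2 + g 3 + g 4 + g 5" for g :: "nat \<Rightarrow> real"
      by (simp add: eval_nat_numeral)
    then show ?thesis by (simp add: cos_coeff_def fact_numeral)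
  qed
  ultimately have "cos y = 1 - y^2/2 + y^4/24 - cos t * y^6 / 720" using t by (simp add: fact_numeral)
  moreover have "cos t * y^6 \<le> y^6" using mult_right_mono[of "cos t" 1 "y^6"] by simp
  ultimately show ?thesis by (simp add: divide_right_mono)
qed

lemma pi_power_bounds:
  "9 \<le> pi^2" "pi^2 \<le> 987/100" "pi^3 \<le> 3101/100" "97 \<le> pi^4" "pi^6 \<le> 962"
proof -
  have lo: "314159/100000 \<le> pi" and hi: "pi \<le> 31416/10000" using pi_approx by simp_all
  have "(3::real)^2 \<le> pi^2" using pi_gt3 by (intro power_mono) auto
  then show "9 \<le> pi^2" by simp
  have "pi^2 \<le> (31416/10000)^2" "pi^3 \<le> (31416/10000)^3" "pi^6 \<le> (31416/10000)^6"
    using hi by (intro power_mono; simp)+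
  then show "pi^2 \<le> 987/100" "pi^3 \<le> 3101/100" "pi^6 \<le> 962" by (simp_all add: power_divide)
  have "(314159/100000)^4 \<le> pi^4" using lo by (intro power_mono) auto
  then show "97 \<le> pi^4" by (simp add: power_divide)
qed

lemma sin_pi_one_minus: "sin (pi * (1 - x)) = sin (pi * x)"
  by (simp add: right_diff_distrib)

lemma le_on_unit_interval_by_symmetry:
  fixes f g :: "real \<Rightarrow> real"
  assumes "\<And>x. f (1 - x) = f x" "\<And>x. g (1 - x) = g x"
    and half: "\<And>x. 0 \<le> x \<Longrightarrow> x \<le> 1/2 \<Longrightarrow> f x \<le> g x"
    and "0 \<le> x" "x \<le> 1"
  shows "f x \<le> g x"
proof (cases "x \<le> 1/2")
  case False
  then show ?thesis using half[of "1 - x"] assms by simp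
qed (use assms in simp)

lemma sin_pi_squared_le:
  fixes x :: real
  assumes "0 \<le> x" "x \<le> 1"
  shows "sin (pi * x)^2 \<le> 4 * x * (1 - x)"
proof (rule le_on_unit_interval_by_symmetry[where f = "\<lambda>x. sin (pi * x)^2"])
  fix x :: real assume x: "0 \<le> x" "x \<le> 1/2"
  show "sin (pi * x)^2 \<le> 4 * x * (1 - x)"
  proof (cases "x \<le> 1/4")
    case True
    have "sin (pi * x) \<le> pi * x" using x by (intro sin_x_le_x) auto
    then have "sin (pi * x)^2 \<le> (pi * x)^2" using x by (intro power_mono sin_ge_zero) auto
    also have "\<dots> = x * (pi^2 * x)" by (simp add: power2_eq_square)
    also have "\<dots> \<le> x * (4 * (1 - x))"
      using x True pi_power_bounds(2) mult_right_mono[of "pi^2" "987/100" x]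
      by (intro mult_left_mono) auto
    finally show ?thesis by (simp add: algebra_simps)
  next
    case False
    define t where "t = 1/2 - x"
    have t: "0 \<le> t" "t \<le> 1/4" using x False by (auto simp: t_def)
    have "sin (pi * x) = cos (pi * t)" by (simp add: t_def cos_sin_eq right_diff_distrib)
    then have sc: "sin (pi * x)^2 = 1 - sin (pi * t)^2" by (simp add: cos_squared_eq)
    have "pi*t - (pi*t)^3/6 \<le> sin (pi * t)" using t by (intro sin_ge_cubic) auto
    moreover have "(pi*t)^3 = pi^3 * t^3" by (simp add: power_mult_distrib)
    moreover have "314159/100000 * t \<le> pi*t" using pi_approx t by (intro mult_right_mono) auto
    moreover have "pi^3 * t^3 \<le> 3101/100 * t^3" using pi_power_bounds(3) t by (intro mult_right_mono) auto
    moreover have "t * t^2 \<le> t * (1/4)^2" using t by (intro mult_left_mono power_mono) auto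
    then have "t^3 \<le> t/16" by (simp add: power3_eq_cube power2_eq_square)
    ultimately have "2 * t \<le> sin (pi * t)" using t by linarith
    then have "(2 * t)^2 \<le> sin (pi * t)^2" using t by (intro power_mono) auto
    then show ?thesis using sc by (simp add: t_def power2_eq_square algebra_simps)
  qed
qed (use assms in \<open>simp_all add: sin_pi_one_minus\<close>)

lemma sin_pi_ge_quartic:
  fixes x :: real
  assumes "0 \<le> x" "x \<le> 1"
  shows "4 * x * (1 - x) * (3/4 + x * (1 - x)) \<le> sin (pi * x)"
proof (rule le_on_unit_interval_by_symmetry[where g = "\<lambda>x. sin (pi * x)"])
  fix x :: real assume x: "0 \<le> x" "x \<le> 1/2"
  show "4 * x * (1 - x) * (3/4 + x * (1 - x)) \<le> sin (pi * x)"
  proof (cases "x \<le> 1/5")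
    case True
    have "pi*x - (pi*x)^3/6 \<le> sin (pi * x)" using x by (intro sin_ge_cubic) auto
    moreover have "(pi*x)^3 = pi^3 * x^3" by (simp add: power_mult_distrib)
    moreover have "314159/100000 * x \<le> pi*x" using pi_approx x by (intro mult_right_mono) auto
    moreover have "pi^3 * x^3 \<le> 3101/100 * x^3" using pi_power_bounds(3) x by (intro mult_right_mono) auto
    moreover have "x * x^3 \<le> 1/5 * x^3" using x True by (intro mult_right_mono) auto
    then have "x^4 \<le> x^3/5" by (simp add: power_Suc[symmetric] del: power_Suc)
    moreover have "0 \<le> x * (x - 1/4)^2" using x by simp
    moreover have "x * (x - 1/4)^2 = x^3 - x^2/2 + x/16"
      by (simp add: power2_eq_square power3_eq_cube algebra_simps)
    moreover have "4 * x * (1 - x) * (3/4 + x * (1 - x)) = 3*x + x^2 - 8*x^3 + 4*x^4"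
      by (simp add: power2_eq_square power3_eq_cube power4_eq_xxxx algebra_simps)
    moreover have "0 \<le> x^2" "0 \<le> x^3" using x by auto
    ultimately show ?thesis using x by linarith
  next
    case False
    define t where "t = 1/2 - x"
    have t: "0 \<le> t" "t \<le> 3/10" using x False by (auto simp: t_def)
    have "sin (pi * x) = cos (pi * t)" by (simp add: t_def cos_sin_eq right_diff_distrib)
    moreover have "1 - (pi*t)^2/2 + (pi*t)^4/24 - (pi*t)^6/720 \<le> cos (pi * t)"
      by (rule cos_ge_sextic)
    moreover have "pi^2 * t^2 \<le> 987/100 * t^2" "97 * t^4 \<le> pi^4 * t^4" "pi^6 * t^6 \<le> 962 * t^6"
      using pi_power_bounds by (intro mult_right_mono; simp)+
    moreover have "(pi*t)^2 = pi^2 * t^2" "(pi*t)^4 = pi^4 * t^4" "(pi*t)^6 = pi^6 * t^6"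
      by (simp_all add: power_mult_distrib)
    moreover have "t^2 * t^4 \<le> t^2 * (3/10)^4" using t by (intro mult_left_mono power_mono) auto
    then have "t^6 \<le> 81/10000 * t^2" by (simp add: power_add[symmetric] mult.commute power_divide)
    moreover have "4 * x * (1 - x) * (3/4 + x * (1 - x)) = 1 - 5*t^2 + 4*t^4"
      unfolding t_def power4_eq_xxxx power2_eq_square by algebra
    moreover have "0 \<le> t^4" "0 \<le> t^2" by simp_all
    ultimately show ?thesis by linarith
  qed
qed (use assms in \<open>simp_all add: sin_pi_one_minus algebra_simps\<close>)

lemma sin_pi_squared_mult_ge:
  fixes x :: real
  assumes x: "0 \<le> x" "x \<le> 1"
  shows "8 * x^2 * (1 - x)^2 \<le> sin (pi * x)^2 * (x^2 + (1 - x)^2)"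
proof -
  define w where "w = x * (1 - x)"
  have w0: "0 \<le> w" using x by (simp add: w_def)
  have "1/4 - w = (x - 1/2)^2" by (simp add: w_def power2_eq_square algebra_simps)
  then have w1: "w \<le> 1/4" by (metis diff_ge_0_iff_ge zero_le_power2)
  have "4 * w * (3/4 + w) \<le> sin (pi * x)" using sin_pi_ge_quartic[OF x] by (simp add: w_def)
  then have "(4 * w * (3/4 + w))^2 \<le> sin (pi * x)^2" using w0 by (intro power_mono) auto
  then have "(4 * w * (3/4 + w))^2 * (1 - 2*w) \<le> sin (pi * x)^2 * (1 - 2*w)"
    using w1 by (intro mult_right_mono) auto
  moreover have "(4 * w * (3/4 + w))^2 * (1 - 2*w) - 8*w^2 = 8*w^2 * (1/4 - w) * (4*w^2 + 5*w + 1/2)"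
    by (simp add: power2_eq_square algebra_simps)
  moreover have "0 \<le> 8*w^2 * (1/4 - w) * (4*w^2 + 5*w + 1/2)" using w0 w1 by simp
  moreover have "x^2 + (1 - x)^2 = 1 - 2*w" "8 * x^2 * (1 - x)^2 = 8*w^2"
    by (simp_all add: w_def power2_eq_square algebra_simps)
  ultimately show ?thesis by (metis diff_ge_0_iff_ge order.trans)
qed

section \<open>The squared sinc function\<close>

lemma h_nonneg: "0 \<le> h x"
  by (simp add: h_def)

lemma h_nonzero: "x \<noteq> 0 \<Longrightarrow> h x = sin (pi * x)^2 / (pi^2 * x^2)"
  by (simp add: h_def power_divide power_mult_distrib)

lemma sin_pi_add_nat_squared: "sin (pi * (x + real n))^2 = sin (pi * x)^2"
proof -
  have "sin (pi * (x + real n)) = sin (pi * x) * (-1)^n"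
    by (simp add: distrib_left sin_add mult.commute)
  then show ?thesis by (simp add: power_mult_distrib power_even_eq[symmetric] flip: power_mult)
qed

lemma sin_pi_diff_nat_squared: "sin (pi * (x - real n))^2 = sin (pi * x)^2"
  using sin_pi_add_nat_squared[of "x - real n" n] by simp

lemma h_add_nat: "x + real n \<noteq> 0 \<Longrightarrow> h (x + real n) = sin (pi * x)^2 / (pi^2 * (x + real n)^2)"
  by (simp add: h_nonzero sin_pi_add_nat_squared)

lemma h_diff_nat: "x \<noteq> real n \<Longrightarrow> h (x - real n) = sin (pi * x)^2 / (pi^2 * (x - real n)^2)"
  by (simp add: h_nonzero sin_pi_diff_nat_squared)

lemma h_half_add_nat:
  "h (1/2 + real m) = 1 / (pi^2 * (1/2 + real m)^2)"
  "h (1/2 - (real m + 1)) = 1 / (pi^2 * (1/2 + real m)^2)"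
proof -
  have "h (1/2 + real m) = 1 / (pi^2 * (real m + 1/2)^2)"
    using h_add_nat[of "1/2" m] by (simp add: add_pos_nonneg)
  then show "h (1/2 + real m) = 1 / (pi^2 * (1/2 + real m)^2)"
    by (simp add: add.commute)
  have "h (1/2 - real (Suc m)) = 1 / (pi^2 * (1/2 - real (Suc m))^2)"
    using h_diff_nat[of "1/2" "Suc m"] by simp
  moreover have "(1/2 - real (Suc m))^2 = (1/2 + real m)^2"
    by (simp add: power2_eq_square algebra_simps)
  ultimately show "h (1/2 - (real m + 1)) = 1 / (pi^2 * (1/2 + real m)^2)"
    by simp
qed

lemma h_pair_at_half: "h (1/2) = 4 / pi^2" "h (1/2 - 1) = 4 / pi^2"
  using h_half_add_nat[of 0] by (simp_all add: power_divide)

lemma h_pair_min_at_half: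
  fixes x :: real
  assumes x: "0 \<le> x" "x \<le> 1"
  shows "h (1/2) + h (1/2 - 1) \<le> h x + h (x - 1)"
proof -
  have half: "h (1/2) + h (1/2 - 1) = 8 / pi^2" using h_pair_at_half by simp
  have "8 / pi^2 \<le> 1" using pi_power_bounds(1) by simp
  consider "x = 0" | "x = 1" | "0 < x" "x < 1" using x by linarith
  then show ?thesis
  proof cases
    case 1 then show ?thesis using half \<open>8 / pi^2 \<le> 1\<close> h_nonneg[of "-1"] by (simp add: h_def)
  next
    case 2 then show ?thesis using half \<open>8 / pi^2 \<le> 1\<close> by (simp add: h_def)
  next
    case 3
    define s where "s = sin (pi * x)^2"
    have hx: "h x = s / (pi^2 * x^2)" using 3 by (simp add: h_nonzero s_def)
    have hx1: "h (x - 1) = s / (pi^2 * (1 - x)^2)"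
      using 3 h_diff_nat[of x 1] by (simp add: s_def power2_commute)
    have "8 / pi^2 = (8 * x^2 * (1 - x)^2) / (x^2 * (1 - x)^2) / pi^2" using 3 by simp
    also have "\<dots> \<le> (s * (x^2 + (1 - x)^2)) / (x^2 * (1 - x)^2) / pi^2"
      using sin_pi_squared_mult_ge[OF x] 3 by (intro divide_right_mono) (auto simp: s_def)
    also have "\<dots> = h x + h (x - 1)" unfolding hx hx1 using 3 by (simp add: field_simps)
    finally show ?thesis using half by simp
  qed
qed

lemma h_shifted_pair_max_at_half:
  fixes x :: real and m :: nat
  assumes x: "0 \<le> x" "x \<le> 1" and m: "1 \<le> m"
  shows "h (x + real m) + h (x - (real m + 1)) \<le> h (1/2 + real m) + h (1/2 - (real m + 1))"
proof -
  define s where "s = sin (pi * x)^2"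
  define M where "M = 1/2 + real m"
  define P where "P = x + real m"
  define Q where "Q = x - (real m + 1)"
  have M: "3/2 \<le> M" using m by (simp add: M_def)
  have P: "0 < P" using x m by (simp add: P_def)
  have Q: "Q < 0" using x m by (simp add: Q_def)
  have hP: "h P = s / (pi^2 * P^2)" using P h_add_nat[of x m] by (simp add: s_def P_def)
  have hQ: "h Q = s / (pi^2 * Q^2)"
    using Q h_diff_nat[of x "Suc m"] by (simp add: s_def Q_def add.commute)
  have half: "h (1/2 + real m) + h (1/2 - (real m + 1)) = 2 / (pi^2 * M^2)"
    unfolding h_half_add_nat M_def by simp
  define J where "J = 4 * x * (1 - x)"
  define T where "T = (x - 1/2)^2"
  have poly: "2 * P^2 * Q^2 - J * (P^2 + Q^2) * M^2 = 2 * T * (4 * M^4 - 3 * M^2 + 4 * M^2 * T + T)"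
    unfolding P_def Q_def J_def T_def M_def power4_eq_xxxx power2_eq_square by algebra
  have "0 \<le> 4 * M^4 - 3 * M^2"
  proof -
    have "9/4 \<le> M^2" using power_mono[OF M, of 2] by (simp add: power_divide)
    then have "3 * M^2 \<le> 4 * M^2 * M^2" by (intro mult_right_mono) auto
    then show ?thesis by (simp add: power4_eq_xxxx power2_eq_square)
  qed
  then have "0 \<le> 2 * T * (4 * M^4 - 3 * M^2 + 4 * M^2 * T + T)" by (simp add: T_def)
  then have JM: "J * (P^2 + Q^2) * M^2 \<le> 2 * P^2 * Q^2" using poly by linarith
  have "h P + h Q \<le> J / (pi^2 * P^2) + J / (pi^2 * Q^2)"
    unfolding hP hQ using sin_pi_squared_le[OF x] by (intro add_mono divide_right_mono) (auto simp: s_def J_def)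
  also have "\<dots> = (J * (P^2 + Q^2) * M^2) / (P^2 * Q^2 * M^2) / pi^2"
    using P Q M by (simp add: field_simps)
  also have "\<dots> \<le> (2 * P^2 * Q^2) / (P^2 * Q^2 * M^2) / pi^2"
    using JM P Q M by (intro divide_right_mono) auto
  also have "\<dots> = 2 / (pi^2 * M^2)" using P Q M by (simp add: field_simps)
  finally show ?thesis using half by (simp add: P_def Q_def)
qed

lemma h_pair_mult_le:
  fixes x :: real
  assumes x: "0 \<le> x" "x \<le> 1"
  shows "h x * h (x - 1) \<le> (4 / pi^2)^2"
proof -
  consider "x = 0" | "x = 1" | "0 < x" "x < 1" using x by linarith
  then show ?thesis
  proof cases
    case 3
    define s where "s = sin (pi * x)^2"
    have hx: "h x = s / (pi^2 * x^2)" using 3 by (simp add: h_nonzero s_def)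
    have hx1: "h (x - 1) = s / (pi^2 * (1 - x)^2)"
      using 3 h_diff_nat[of x 1] by (simp add: s_def power2_commute)
    have "h x * h (x - 1) = (s / (x * (1 - x)) / pi^2)^2"
      unfolding hx hx1 using 3 by (simp add: field_simps power2_eq_square)
    also have "\<dots> \<le> (4 / pi^2)^2"
    proof (intro power_mono divide_right_mono)
      show "s / (x * (1 - x)) \<le> 4"
        using sin_pi_squared_le[OF x] 3 by (simp add: s_def pos_divide_le_eq)
    qed (use 3 in \<open>auto simp: s_def\<close>)
    finally show ?thesis .
  qed (simp_all add: h_def)
qed

lemma h_pair_norm_gap_max_at_half:
  fixes x r :: real
  assumes x: "0 \<le> x" "x \<le> 1" and r: "1 \<le> r"
  shows "h x + h (x - 1) - (h x powr r + h (x - 1) powr r) powr (1/r)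
          \<le> h (1/2) + h (1/2 - 1) - (h (1/2) powr r + h (1/2 - 1) powr r) powr (1/r)"
proof -
  define k where "k = 4 / pi^2"
  have k: "0 < k" by (simp add: k_def)
  have "2 powr (1/r) \<le> 2" using r powr_mono[of "1/r" 1 2] by simp
  have "(k powr r + k powr r) powr (1/r) = 2 powr (1/r) * k"
    using k r by (simp add: powr_mult powr_powr flip: mult_2)
  then have half: "h (1/2) + h (1/2 - 1) - (h (1/2) powr r + h (1/2 - 1) powr r) powr (1/r)
      = (2 - 2 powr (1/r)) * k"
    unfolding h_pair_at_half k_def[symmetric] by (simp add: algebra_simps)
  have "h x + h (x - 1) - (h x powr r + h (x - 1) powr r) powr (1/r)
      \<le> (2 - 2 powr (1/r)) * sqrt (h x * h (x - 1))"
    by (rule add_minus_lr_norm_le_sqrt_mult[OF r h_nonneg h_nonneg])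
  also have "\<dots> \<le> (2 - 2 powr (1/r)) * k"
    using real_sqrt_le_mono[OF h_pair_mult_le[OF x]] k \<open>2 powr (1/r) \<le> 2\<close>
    by (intro mult_left_mono) (auto simp: k_def)
  finally show ?thesis using half by simp
qed

lemma h_shifted_pair_powr_gap_max_at_half:
  fixes x r :: real and m :: nat
  assumes x: "0 \<le> x" "x \<le> 1" and m: "1 \<le> m" and r: "1 \<le> r"
  shows "(h (x + real m) + h (x - (real m + 1))) powr r - h (x + real m) powr r
            - h (x - (real m + 1)) powr r
          \<le> (h (1/2 + real m) + h (1/2 - (real m + 1))) powr r - h (1/2 + real m) powr r
            - h (1/2 - (real m + 1)) powr r"
proof -
  define A where "A = h (x + real m)"
  define B where "B = h (x - (real m + 1))"
  define k where "k = 1 / (pi^2 * (1/2 + real m)^2)"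
  define c where "c = 1 - 2 powr (1 - r)"
  have k: "0 \<le> k" by (simp add: k_def)
  have AB: "0 \<le> A" "0 \<le> B" by (simp_all add: A_def B_def h_nonneg)
  have "A + B \<le> 2 * k"
    using h_shifted_pair_max_at_half[OF x m] unfolding A_def B_def h_half_add_nat k_def by simp
  have c: "0 \<le> c" using r powr_mono[of "1 - r" 0 2] by (simp add: c_def)
  have "(A + B) powr r \<le> 2 powr (r - 1) * (A powr r + B powr r)"
    using add_powr_le_two_powr_mult[OF r AB] .
  then have "(A + B) powr r - A powr r - B powr r \<le> c * (A + B) powr r"
    by (simp add: c_def powr_diff field_simps)
  also have "\<dots> \<le> c * (2 * k) powr r"
    using \<open>A + B \<le> 2 * k\<close> AB c r by (intro mult_left_mono powr_mono2) auto
  also have "\<dots> = (2 * k) powr r - k powr r - k powr r"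
    by (simp add: c_def powr_mult powr_diff field_simps)
  finally show ?thesis unfolding A_def B_def h_half_add_nat k_def by simp
qed

theorem lemma5:
  fixes r :: real
  assumes "r \<ge> 1"
  shows "(\<forall>x\<in>{0..1}. h (1/2) + h (1/2 - 1) \<le> h x + h (x - 1))
    \<and> (\<forall>m::nat. m \<ge> 1 \<longrightarrow> (\<forall>x\<in>{0..1}.
          h (x + real m) + h (x - (real m + 1)) \<le> h (1/2 + real m) + h (1/2 - (real m + 1))))
    \<and> (\<forall>x\<in>{0..1}.
          h x + h (x - 1) - (h x powr r + h (x - 1) powr r) powr (1/r)
          \<le> h (1/2) + h (1/2 - 1) - (h (1/2) powr r + h (1/2 - 1) powr r) powr (1/r))
    \<and> (\<forall>m::nat. m \<ge> 1 \<longrightarrow> (\<forall>x\<in>{0..1}.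
          (h (x + real m) + h (x - (real m + 1))) powr r - h (x + real m) powr r
            - h (x - (real m + 1)) powr r
          \<le> (h (1/2 + real m) + h (1/2 - (real m + 1))) powr r - h (1/2 + real m) powr r
            - h (1/2 - (real m + 1)) powr r))"
  using h_pair_min_at_half h_shifted_pair_max_at_half h_pair_norm_gap_max_at_half[OF _ _ assms]
    h_shifted_pair_powr_gap_max_at_half[OF _ _ _ assms]
  by auto

end
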